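(* Let $d\ge2$ and let $B$ be the open unit ball of $\mathbb C^d$. There is no regular Hilbert space of holomorphic functions on $B$ whose kernel $k$ has the property that for all $n\ge1$, all distinct $\lambda_1,\dots,\lambda_n\in B$ and all $z_1,\dots,z_n\in\mathbb C$: there exists a holomorphic $\varphi:B\to\mathbb C$ with $\sup_B|\varphi|\le1$ and $\varphi(\lambda_i)=z_i$ for all $i$ if and only if the matrix $[(1-z_j\bar z_i)k_{\lambda_i}(\lambda_j)]_{i,j=1}^n$ is positive semidefinite.
   Context: Regular space: a Hilbert space $\mathcal H$ of holomorphic functions on $B$ with reproducing kernel $k_\lambda(\mu)$ ($\langle f,k_\lambda\rangle=f(\lambda)$), such that the coordinate multiplications $M^r$ ($(M^rf)(\lambda)=\lambda^rf(\lambda)$) are bounded, $M=(M^1,\dots,M^d)$ has Taylor spectrum in $\mathrm{cl}(B)$ and essential Taylor spectrum in $\partial B$, and $\dim\bigcap_r\ker(\lambda^r-M^r)^*=1$ for all $\lambda\in B$. *)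

theory Defs
  imports "HOL-Analysis.Analysis"
begin

text \<open>Points of C^d are vectors of type complex^'n, d = CARD('n).
  The index type is linearly ordered only to fix signs in the Koszul complex.\<close>

type_synonym 'n hfun = "complex^'n \<Rightarrow> complex"

definition unit_ball :: "(complex^('n::finite)) set" where
  "unit_ball = ball 0 1"

text \<open>Holomorphy on an open set of C^d: complex Frechet differentiability.\<close>
definition cholo :: "'n::finite hfun \<Rightarrow> (complex^('n::finite)) set \<Rightarrow> bool" where
  "cholo f S \<longleftrightarrow> (\<forall>z\<in>S. \<exists>L. (f has_derivative L) (at z) \<and> (\<forall>c v. L (c *s v) = c * L v))"

definition hnorm :: "('n::finite hfun \<Rightarrow> 'n hfun \<Rightarrow> complex) \<Rightarrow> 'n hfun \<Rightarrow> real" where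
  "hnorm ip f = sqrt (Re (ip f f))"

text \<open>A Hilbert space of holomorphic functions on the ball B (functions are extended by 0
  outside B so that H is a genuine linear space of functions).\<close>
definition hilbert_fun_space :: "'n::finite hfun set \<Rightarrow> ('n hfun \<Rightarrow> 'n hfun \<Rightarrow> complex) \<Rightarrow> bool" where
  "hilbert_fun_space H ip \<longleftrightarrow>
     (\<forall>f\<in>H. cholo f unit_ball \<and> (\<forall>z. z \<notin> unit_ball \<longrightarrow> f z = 0)) \<and>
     (\<lambda>z. 0) \<in> H \<and>
     (\<forall>f\<in>H. \<forall>g\<in>H. (\<lambda>z. f z + g z) \<in> H) \<and>
     (\<forall>c. \<forall>f\<in>H. (\<lambda>z. c * f z) \<in> H) \<and>
     (\<forall>f\<in>H. \<forall>g\<in>H. \<forall>h\<in>H. ip (\<lambda>z. f z + g z) h = ip f h + ip g h) \<and>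
     (\<forall>c. \<forall>f\<in>H. \<forall>g\<in>H. ip (\<lambda>z. c * f z) g = c * ip f g) \<and>
     (\<forall>f\<in>H. \<forall>g\<in>H. ip g f = cnj (ip f g)) \<and>
     (\<forall>f\<in>H. Re (ip f f) \<ge> 0) \<and>
     (\<forall>f\<in>H. ip f f = 0 \<longrightarrow> f = (\<lambda>z. 0)) \<and>
     (\<forall>s. (\<forall>i. s i \<in> H) \<and>
          (\<forall>e>0. \<exists>N. \<forall>m\<ge>N. \<forall>n\<ge>N. hnorm ip (\<lambda>z. s m z - s n z) < e) \<longrightarrow>
          (\<exists>f\<in>H. (\<lambda>i. hnorm ip (\<lambda>z. s i z - f z)) \<longlonglongrightarrow> 0))"

text \<open>Reproducing kernel: k \<lambda> = k_\<lambda>, so k \<lambda> \<mu> = k_\<lambda>(\<mu>).\<close>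
definition reproducing_kernel ::
  "'n::finite hfun set \<Rightarrow> ('n hfun \<Rightarrow> 'n hfun \<Rightarrow> complex) \<Rightarrow> (complex^('n::finite) \<Rightarrow> 'n hfun) \<Rightarrow> bool" where
  "reproducing_kernel H ip k \<longleftrightarrow>
     (\<forall>w\<in>unit_ball. k w \<in> H \<and> (\<forall>f\<in>H. ip f (k w) = f w))"

definition mult_op :: "'n \<Rightarrow> 'n::finite hfun \<Rightarrow> 'n hfun" where
  "mult_op r f = (\<lambda>z. z$r * f z)"

definition bounded_mults :: "'n::finite hfun set \<Rightarrow> ('n hfun \<Rightarrow> 'n hfun \<Rightarrow> complex) \<Rightarrow> bool" where
  "bounded_mults H ip \<longleftrightarrow>
     (\<forall>r. (\<forall>f\<in>H. mult_op r f \<in> H) \<and> (\<exists>C. \<forall>f\<in>H. hnorm ip (mult_op r f) \<le> C * hnorm ip f))"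

text \<open>Koszul complex of M - \<lambda>, all degrees at once: a chain assigns to every subset I of
  the index set an element of H (the coefficient of e_I).  Differential:
  d(x e_I) = sum_j (M_j - \<lambda>_j) x e_j \<and> e_I.\<close>
definition koszul_chains :: "'n::finite hfun set \<Rightarrow> ('n set \<Rightarrow> 'n hfun) set" where
  "koszul_chains H = {c. \<forall>I. c I \<in> H}"

definition koszul_d :: "(complex, 'n::{finite,linorder}) vec \<Rightarrow> ('n set \<Rightarrow> 'n hfun) \<Rightarrow> ('n set \<Rightarrow> 'n hfun)" where
  "koszul_d lam c = (\<lambda>J z. \<Sum>j\<in>J. (-1) ^ card {i\<in>J. i < j} * ((z$j - lam$j) * c (J - {j}) z))"

definition koszul_exact :: "((complex, 'n::{finite,linorder}) vec \<Rightarrow> complex) set \<Rightarrow> (complex, 'n) vec \<Rightarrow> bool" where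
  "koszul_exact H lam \<longleftrightarrow>
     {c\<in>koszul_chains H. koszul_d lam c = (\<lambda>I z. 0)} = koszul_d lam ` koszul_chains H"

text \<open>Fredholm: all homology spaces finite dimensional.\<close>
definition koszul_fredholm :: "((complex, 'n::{finite,linorder}) vec \<Rightarrow> complex) set \<Rightarrow> (complex, 'n) vec \<Rightarrow> bool" where
  "koszul_fredholm H lam \<longleftrightarrow>
     (\<exists>F. finite F \<and> F \<subseteq> koszul_chains H \<and>
        (\<forall>c\<in>koszul_chains H. koszul_d lam c = (\<lambda>I z. 0) \<longrightarrow>
           (\<exists>a b. b \<in> koszul_chains H \<and>
              c = (\<lambda>I z. (\<Sum>v\<in>F. a v * v I z) + koszul_d lam b I z))))"

definition taylor_spectrum :: "((complex, 'n::{finite,linorder}) vec \<Rightarrow> complex) set \<Rightarrow> ((complex, 'n) vec) set" where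
  "taylor_spectrum H = {lam. \<not> koszul_exact H lam}"

definition essential_taylor_spectrum :: "((complex, 'n::{finite,linorder}) vec \<Rightarrow> complex) set \<Rightarrow> ((complex, 'n) vec) set" where
  "essential_taylor_spectrum H = {lam. \<not> koszul_fredholm H lam}"

definition joint_adj_kernel ::
  "'n::finite hfun set \<Rightarrow> ('n hfun \<Rightarrow> 'n hfun \<Rightarrow> complex) \<Rightarrow> complex^('n::finite) \<Rightarrow> 'n hfun set" where
  "joint_adj_kernel H ip lam =
     {g\<in>H. \<forall>r. \<forall>f\<in>H. ip (\<lambda>z. lam$r * f z - mult_op r f z) g = 0}"

definition dim_one :: "'n::finite hfun set \<Rightarrow> bool" where
  "dim_one E \<longleftrightarrow> (\<exists>g\<in>E. g \<noteq> (\<lambda>z. 0) \<and> (\<forall>h\<in>E. \<exists>c. h = (\<lambda>z. c * g z)))"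

definition regular_hilbert_space ::
  "((complex, 'n::{finite,linorder}) vec \<Rightarrow> complex) set \<Rightarrow> ('n hfun \<Rightarrow> 'n hfun \<Rightarrow> complex) \<Rightarrow> ((complex, 'n) vec \<Rightarrow> 'n hfun) \<Rightarrow> bool" where
  "regular_hilbert_space H ip k \<longleftrightarrow>
     hilbert_fun_space H ip \<and> reproducing_kernel H ip k \<and> bounded_mults H ip \<and>
     taylor_spectrum H \<subseteq> closure unit_ball \<and>
     essential_taylor_spectrum H \<subseteq> frontier unit_ball \<and>
     (\<forall>lam\<in>unit_ball. dim_one (joint_adj_kernel H ip lam))"

definition psd_mat :: "nat \<Rightarrow> (nat \<Rightarrow> nat \<Rightarrow> complex) \<Rightarrow> bool" where
  "psd_mat n A \<longleftrightarrow> (\<forall>x. (\<Sum>i<n. \<Sum>j<n. cnj (x i) * A i j * x j) \<in> \<real> \<and>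
                         Re (\<Sum>i<n. \<Sum>j<n. cnj (x i) * A i j * x j) \<ge> 0)"

definition pick_property :: "(complex^('n::finite) \<Rightarrow> 'n::finite hfun) \<Rightarrow> bool" where
  "pick_property k \<longleftrightarrow>
     (\<forall>n::nat. n \<ge> 1 \<longrightarrow> (\<forall>(lam :: nat \<Rightarrow> complex^'n) (z :: nat \<Rightarrow> complex).
        inj_on lam {..<n} \<and> (\<forall>i<n. lam i \<in> unit_ball) \<longrightarrow>
        ((\<exists>\<phi>. cholo \<phi> unit_ball \<and> (\<forall>w\<in>unit_ball. norm (\<phi> w) \<le> 1) \<and> (\<forall>i<n. \<phi> (lam i) = z i))
         \<longleftrightarrow> psd_mat n (\<lambda>i j. (1 - z j * cnj (z i)) * k (lam i) (lam j)))))"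

end

theory Submission
  imports Defs "HOL-Complex_Analysis.Conformal_Mappings"
begin

text \<open>The Pick property alone is contradictory once \<open>d \<ge> 2\<close>.  Testing the Pick property with constants shows that \<open>k\<close> is positive on the diagonal and
  hermitian.  The linear function \<open>\<langle>z, \<lambda>/|\<lambda>|\<rangle>\<close> interpolates \<open>0\<close> at the origin and \<open>|\<lambda>|\<close> at \<open>\<lambda>\<close>,
  and by the Schwarz lemma no larger value at \<open>\<lambda>\<close> can be interpolated; hence the \<open>2 \<times> 2\<close> Pick
  matrix of this function on \<open>{0, \<lambda>}\<close> is singular.  Adding a third node \<open>\<mu>\<close>, positivity of a
  \<open>3 \<times> 3\<close> matrix with singular leading minor determines its third row, which yields
  \<open>k(\<mu>, \<lambda>) = conj k(0, \<mu>) k(0, \<lambda>) / (k(0, 0) (1 - \<langle>\<lambda>, \<mu>\<rangle>))\<close>: up to rescaling, \<open>k\<close> is the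
  Drury--Arveson kernel.  But \<open>2 z\<^sub>1 z\<^sub>2\<close> is bounded by \<open>1\<close> on the ball, while its Pick matrix for
  this kernel at \<open>(-1/2, -1/2)\<close>, \<open>(-1/2, 1/2)\<close>, \<open>(1/2, -1/2)\<close> is not positive.\<close>

definition cinner :: "complex^('n::finite) \<Rightarrow> complex^'n \<Rightarrow> complex" where
  "cinner a b = (\<Sum>r\<in>UNIV. a$r * cnj (b$r))"

lemma power2_norm_vec: "(norm (x::complex^('n::finite)))\<^sup>2 = (\<Sum>r\<in>UNIV. (cmod (x$r))\<^sup>2)"
  unfolding norm_vec_def L2_set_def by (simp add: sum_nonneg)

lemma cinner_self: "cinner a a = of_real ((norm a)\<^sup>2)"
proof -
  have "cinner a a = (\<Sum>r\<in>UNIV. of_real ((cmod (a$r))\<^sup>2))"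
    unfolding cinner_def by (intro sum.cong refl) (metis complex_norm_square)
  then show ?thesis by (simp add: power2_norm_vec)
qed

lemma norm_cinner_le: "cmod (cinner a b) \<le> norm a * norm b"
proof -
  have "cmod (cinner a b) \<le> (\<Sum>r\<in>UNIV. cmod (a$r) * cmod (b$r))"
    unfolding cinner_def by (rule order.trans[OF norm_sum]) (simp add: norm_mult)
  also have "\<dots> \<le> L2_set (\<lambda>r. cmod (a$r)) UNIV * L2_set (\<lambda>r. cmod (b$r)) UNIV"
    using L2_set_mult_ineq[of "\<lambda>r. cmod (a$r)" "\<lambda>r. cmod (b$r)" UNIV] by simp
  finally show ?thesis by (simp add: norm_vec_def)
qed

lemma cnj_cinner: "cnj (cinner a b) = cinner b a"
  unfolding cinner_def by (simp add: mult.commute)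

lemma cinner_smult_left: "cinner (c *s a) b = c * cinner a b"
  unfolding cinner_def by (simp add: sum_distrib_left mult.assoc)

lemma cinner_zero_left [simp]: "cinner 0 b = 0"
  and cinner_zero_right [simp]: "cinner a 0 = 0"
  by (simp_all add: cinner_def)

lemma norm_smult_vec: "norm (c *s (x::complex^('n::finite))) = cmod c * norm x"
proof -
  have "(norm (c *s x))\<^sup>2 = (cmod c * norm x)\<^sup>2"
    by (simp add: power2_norm_vec power_mult_distrib norm_mult sum_distrib_left)
  then show ?thesis by (simp add: power2_eq_imp_eq)
qed

lemma unit_ball_iff: "z \<in> unit_ball \<longleftrightarrow> norm z < 1"
  by (simp add: unit_ball_def)

lemma zero_in_unit_ball [simp]: "0 \<in> unit_ball"
  by (simp add: unit_ball_iff)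

lemma norm_cinner_unit_ball_le:
  assumes "w \<in> unit_ball" "norm u \<le> 1"
  shows "cmod (cinner w u) \<le> 1"
proof -
  have "norm w * norm u \<le> 1"
    using assms by (simp add: unit_ball_iff mult_le_one)
  then show ?thesis using norm_cinner_le[of w u] by linarith
qed

lemma cinner_smult_right: "cinner a (c *s b) = cnj c * cinner a b"
  unfolding cinner_def by (simp add: sum_distrib_left algebra_simps)

lemma cinner_normalize_right:
  "cinner a ((1 / of_real (norm l)) *s l) = cinner a l / of_real (norm l)"
  by (simp add: cinner_smult_right divide_inverse mult.commute)

lemma norm_normalize_vec: "l \<noteq> 0 \<Longrightarrow> norm ((1 / of_real (norm l)) *s (l::complex^('n::finite))) = 1"
  by (simp add: norm_smult_vec norm_divide)

lemma one_minus_cinner_nonzero: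
  assumes "l \<in> unit_ball" "\<mu> \<in> unit_ball"
  shows "1 - cinner l \<mu> \<noteq> 0"
proof -
  have "norm l * norm \<mu> < 1"
    using assms by (simp add: unit_ball_iff) (smt (verit) mult_left_le_one_le norm_ge_zero)
  then show ?thesis using norm_cinner_le[of l \<mu>] by auto
qed

lemma cholo_const: "cholo (\<lambda>_. c) S"
  unfolding cholo_def by (auto intro!: exI[of _ "\<lambda>_. 0"])

lemma cholo_cinner_left: "cholo (\<lambda>z. cinner z a) S"
proof -
  have "bounded_linear (\<lambda>z. cinner z a)"
    unfolding cinner_def
    by (intro bounded_linear_sum bounded_linear_mult_left[THEN bounded_linear_compose]
        bounded_linear_vec_nth)
  then show ?thesis
    unfolding cholo_def using bounded_linear_imp_has_derivative cinner_smult_left by blast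
qed

lemma cholo_coord_mult: "cholo (\<lambda>z::complex^('n::finite). c * (z$i * z$j)) S"
  unfolding cholo_def
proof
  fix z :: "complex^'n"
  have d: "((\<lambda>z::complex^'n. z$r) has_derivative (\<lambda>h. h$r)) (at z)" for r
    by (rule bounded_linear_imp_has_derivative[OF bounded_linear_vec_nth])
  have "((\<lambda>z. c * (z$i * z$j)) has_derivative (\<lambda>h. c * (z$i * h$j + h$i * z$j))) (at z)"
    by (rule has_derivative_mult_right[OF has_derivative_mult[OF d d]])
  then show "\<exists>L. ((\<lambda>z. c * (z$i * z$j)) has_derivative L) (at z) \<and> (\<forall>c v. L (c *s v) = c * L v)"
    by (auto simp: algebra_simps)
qed

lemma bounded_linear_smult_vec: "bounded_linear (\<lambda>t::complex. t *s (u::complex^('n::finite)))"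
proof (rule bounded_linear_intro[where K="norm u"])
  show "(r *\<^sub>R t) *s u = r *\<^sub>R (t *s u)" for r t
    unfolding vec_eq_iff by (simp add: scaleR_conv_of_real[where 'a=complex])
qed (simp_all add: norm_smult_vec)

lemma holomorphic_on_cholo_line:
  assumes "cholo \<phi> unit_ball" "norm u = 1"
  shows "(\<lambda>t. \<phi> (t *s u)) holomorphic_on ball 0 1"
  unfolding holomorphic_on_def
proof
  fix t :: complex assume "t \<in> ball 0 1"
  then have "t *s u \<in> unit_ball" by (simp add: unit_ball_iff norm_smult_vec assms(2))
  then obtain L where L: "(\<phi> has_derivative L) (at (t *s u))" "\<forall>c v. L (c *s v) = c * L v"
    using assms(1) unfolding cholo_def by blast
  have "((\<lambda>t. \<phi> (t *s u)) has_derivative (\<lambda>h. L (h *s u))) (at t)"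
    using diff_chain_at[OF bounded_linear_imp_has_derivative[OF bounded_linear_smult_vec] L(1)]
    by (simp add: o_def)
  moreover have "(\<lambda>h. L (h *s u)) = (*) (L u)" using L(2) by (auto simp: mult.commute)
  ultimately show "(\<lambda>t. \<phi> (t *s u)) field_differentiable at t within ball 0 1"
    by (metis field_differentiable_at_within field_differentiable_def has_field_derivative_def)
qed

lemma Schwarz_Lemma_le:
  assumes "f holomorphic_on ball 0 1" "f 0 = 0" "\<And>z. norm z < 1 \<Longrightarrow> norm (f z) \<le> 1"
    and "norm \<xi> < 1"
  shows "norm (f \<xi>) \<le> norm \<xi>"
proof (rule field_le_mult_one_interval)
  fix s :: real assume s: "0 < s" "s < 1"
  have "norm (s * f z) < 1" if "norm z < 1" for z
    using s assms(3)[OF that] by (simp add: norm_mult mult_le_one le_less_trans[of _ s])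
  then have "norm (s * f \<xi>) \<le> norm \<xi>"
    by (intro Schwarz_Lemma(1)[where f="\<lambda>z. s * f z"] holomorphic_intros assms) (auto simp: assms(2))
  then show "s * norm (f \<xi>) \<le> norm \<xi>" using s by (simp add: norm_mult)
qed

lemma cholo_Schwarz_Lemma:
  assumes "cholo \<phi> unit_ball" "\<forall>w\<in>unit_ball. cmod (\<phi> w) \<le> 1" "\<phi> 0 = 0" "l \<in> unit_ball"
  shows "cmod (\<phi> l) \<le> norm l"
proof (cases "l = 0")
  case True then show ?thesis using assms(3) by simp
next
  case False
  define u where "u = (1 / of_real (norm l)) *s l"
  have u: "norm u = 1" unfolding u_def by (rule norm_normalize_vec[OF False])
  have l: "l = of_real (norm l) *s u" using False by (simp add: u_def)
  have "cmod (\<phi> (of_real (norm l) *s u)) \<le> cmod (of_real (norm l) :: complex)"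
    using assms u by (intro Schwarz_Lemma_le holomorphic_on_cholo_line)
      (auto simp: unit_ball_iff norm_smult_vec)
  then show ?thesis using l by simp
qed

definition quad_form :: "nat \<Rightarrow> (nat \<Rightarrow> nat \<Rightarrow> complex) \<Rightarrow> (nat \<Rightarrow> complex) \<Rightarrow> complex" where
  "quad_form n A x = (\<Sum>i<n. \<Sum>j<n. cnj (x i) * A i j * x j)"

lemma psd_matD: "psd_mat n A \<Longrightarrow> quad_form n A x \<in> \<real> \<and> 0 \<le> Re (quad_form n A x)"
  unfolding psd_mat_def quad_form_def by blast

lemma psd_matI: "(\<And>x. quad_form n A x \<in> \<real> \<and> 0 \<le> Re (quad_form n A x)) \<Longrightarrow> psd_mat n A"
  unfolding psd_mat_def quad_form_def by blast

lemma quad_form_supported: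
  assumes "S \<subseteq> {..<n}" "\<And>t. t \<notin> S \<Longrightarrow> x t = 0"
  shows "quad_form n A x = (\<Sum>i\<in>S. \<Sum>j\<in>S. cnj (x i) * A i j * x j)"
proof -
  have inner: "(\<Sum>j<n. cnj (x i) * A i j * x j) = (\<Sum>j\<in>S. cnj (x i) * A i j * x j)" for i
    by (rule sum.mono_neutral_right) (use assms in auto)
  show ?thesis
    unfolding quad_form_def inner by (rule sum.mono_neutral_right) (use assms in auto)
qed

lemma psd_mat_diag:
  assumes "psd_mat n A" "i < n"
  shows "A i i \<in> \<real>" "0 \<le> Re (A i i)"
proof -
  have "quad_form n A (\<lambda>t. if t = i then 1 else 0) = A i i"
    by (subst quad_form_supported[of "{i}"]) (use assms(2) in auto)
  then show "A i i \<in> \<real>" "0 \<le> Re (A i i)"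
    using psd_matD[OF assms(1), of "\<lambda>t. if t = i then 1 else 0"] by auto
qed

lemma psd_mat_hermitian:
  assumes "psd_mat n A" "i < n" "j < n"
  shows "A j i = cnj (A i j)"
proof (cases "i = j")
  case True then show ?thesis using psd_mat_diag[OF assms(1,2)] by (simp add: Reals_cnj_iff)
next
  case False
  have d: "Im (A i i) = 0" "Im (A j j) = 0"
    using psd_mat_diag[OF assms(1)] assms(2,3) by (auto simp: complex_is_Real_iff)
  have "quad_form n A (\<lambda>t. if t = i then 1 else if t = j then 1 else 0) = A i i + A i j + A j i + A j j"
    by (subst quad_form_supported[of "{i, j}"]) (use assms False in auto)
  then have im: "Im (A i j) + Im (A j i) = 0"
    using psd_matD[OF assms(1), of "\<lambda>t. if t = i then 1 else if t = j then 1 else 0"] d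
    by (auto simp: complex_is_Real_iff)
  have "quad_form n A (\<lambda>t. if t = i then 1 else if t = j then \<i> else 0)
      = A i i + A i j * \<i> - \<i> * A j i + A j j"
    by (subst quad_form_supported[of "{i, j}"]) (use assms False in \<open>auto simp: algebra_simps\<close>)
  then have re: "Re (A i j) - Re (A j i) = 0"
    using psd_matD[OF assms(1), of "\<lambda>t. if t = i then 1 else if t = j then \<i> else 0"] d
    by (auto simp: complex_is_Real_iff)
  show ?thesis using im re by (simp add: complex_eq_iff)
qed

lemma quad_form_2:
  "quad_form 2 A x = cnj (x 0) * A 0 0 * x 0 + cnj (x 0) * A 0 1 * x 1
     + cnj (x 1) * A 1 0 * x 0 + cnj (x 1) * A 1 1 * x 1"
  by (simp add: quad_form_def numeral_2_eq_2 lessThan_Suc algebra_simps)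

lemma quad_form_3:
  "quad_form 3 A x = cnj (x 0) * A 0 0 * x 0 + cnj (x 0) * A 0 1 * x 1 + cnj (x 0) * A 0 2 * x 2
     + cnj (x 1) * A 1 0 * x 0 + cnj (x 1) * A 1 1 * x 1 + cnj (x 1) * A 1 2 * x 2
     + cnj (x 2) * A 2 0 * x 0 + cnj (x 2) * A 2 1 * x 1 + cnj (x 2) * A 2 2 * x 2"
  by (simp add: quad_form_def numeral_3_eq_3 numeral_2_eq_2 lessThan_Suc algebra_simps)

lemma psd_mat_2_det:
  assumes p: "psd_mat 2 A" and a: "A 0 0 = of_real a" "a > 0"
  shows "(cmod (A 0 1))\<^sup>2 \<le> a * Re (A 1 1)"
proof -
  define m where "m = A 0 1"
  define b where "b = Re (A 1 1)"
  have h: "A 1 0 = cnj m" using psd_mat_hermitian[OF p, of 0 1] by (simp add: m_def)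
  have bb: "A 1 1 = of_real b"
    using psd_mat_diag[OF p, of 1] by (simp add: b_def complex_is_Real_iff complex_eq_iff)
  define x where "x = (\<lambda>t::nat. if t = 0 then - m else of_real a)"
  have "Re (quad_form 2 A x) = a * (a * b - ((Re m)\<^sup>2 + (Im m)\<^sup>2))"
    using h bb by (simp add: quad_form_2 x_def m_def a algebra_simps power2_eq_square)
  moreover have "Re (quad_form 2 A x) \<ge> 0" using psd_matD[OF p] by blast
  ultimately have "a * b - ((Re m)\<^sup>2 + (Im m)\<^sup>2) \<ge> 0"
    using a(2) by (simp add: zero_le_mult_iff)
  then show ?thesis by (simp add: m_def b_def cmod_power2)
qed

lemma psd_mat_2I:
  assumes h: "A 1 0 = cnj (A 0 1)" and a: "A 0 0 = of_real a" "a > 0"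
    and b: "A 1 1 = of_real b" and det: "(cmod (A 0 1))\<^sup>2 \<le> a * b"
  shows "psd_mat 2 A"
proof (rule psd_matI)
  fix x
  define m where "m = A 0 1"
  have "Im (quad_form 2 A x) = 0"
    using h a b by (simp add: quad_form_2 algebra_simps)
  moreover
  \<comment> \<open>completing the square\<close>
  have "a * Re (quad_form 2 A x) = (a * Re (x 0) + Re (m * x 1))\<^sup>2 + (a * Im (x 0) + Im (m * x 1))\<^sup>2
      + (a * b - ((Re m)\<^sup>2 + (Im m)\<^sup>2)) * ((Re (x 1))\<^sup>2 + (Im (x 1))\<^sup>2)"
    using h a b unfolding m_def by (simp add: quad_form_2 algebra_simps power2_eq_square)
  moreover have "(a * b - ((Re m)\<^sup>2 + (Im m)\<^sup>2)) * ((Re (x 1))\<^sup>2 + (Im (x 1))\<^sup>2) \<ge> 0"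
    using det by (intro mult_nonneg_nonneg) (simp_all add: m_def cmod_power2)
  ultimately have "Im (quad_form 2 A x) = 0" "0 \<le> a * Re (quad_form 2 A x)"
    by (auto intro: add_nonneg_nonneg)
  then show "quad_form 2 A x \<in> \<real> \<and> 0 \<le> Re (quad_form 2 A x)"
    using a(2) by (simp add: complex_is_Real_iff zero_le_mult_iff)
qed

lemma psd_mat_3_singular_minor:
  assumes p: "psd_mat 3 A" and a: "A 0 0 = of_real a" "a > 0"
    and sing: "A 0 0 * A 1 1 = A 0 1 * A 1 0"
  shows "A 2 1 * A 0 0 = A 2 0 * A 0 1"
proof (rule ccontr)
  assume "\<not> ?thesis"
  define r where "r = A 2 1 * A 0 0 - A 2 0 * A 0 1"
  have "r \<noteq> 0" using \<open>A 2 1 * A 0 0 \<noteq> A 2 0 * A 0 1\<close> by (simp add: r_def)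
  define c where "c = Re (A 2 2)"
  have c: "A 2 2 = of_real c" "c \<ge> 0"
    using psd_mat_diag[OF p, of 2] by (simp_all add: c_def complex_is_Real_iff complex_eq_iff)
  define s where "s = 1 / (c + 1)"
  have s: "s > 0" "s * c < 1" using c(2) by (auto simp: s_def field_simps)
  have h: "A 1 0 = cnj (A 0 1)" "A 2 0 = cnj (A 0 2)" "A 2 1 = cnj (A 1 2)"
    using psd_mat_hermitian[OF p, of 0 1] psd_mat_hermitian[OF p, of 0 2]
      psd_mat_hermitian[OF p, of 1 2] by simp_all
  define t where "t = - of_real s * r"
  \<comment> \<open>the first two entries of \<open>x\<close> span the kernel of the singular minor\<close>
  define x where "x = (\<lambda>i::nat. if i = 0 then - A 0 1 else if i = 1 then A 0 0 else t)"
  have "quad_form 3 A x = A 0 0 * (A 0 0 * A 1 1 - A 0 1 * A 1 0)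
      + t * cnj r + cnj t * r + cnj t * t * A 2 2"
    using h a by (simp add: quad_form_3 x_def r_def algebra_simps)
  also have "\<dots> = t * cnj r + cnj t * r + cnj t * t * A 2 2"
    using sing by simp
  also have "\<dots> = of_real (s * (s * c - 2)) * (r * cnj r)"
    by (simp add: t_def c algebra_simps)
  also have "\<dots> = of_real (s * (s * c - 2) * (cmod r)\<^sup>2)"
    by (simp only: complex_norm_square of_real_mult)
  finally have "Re (quad_form 3 A x) = s * (s * c - 2) * (cmod r)\<^sup>2"
    by simp
  moreover have "s * (s * c - 2) * (cmod r)\<^sup>2 < 0"
    using s \<open>r \<noteq> 0\<close> by (simp add: mult_pos_neg mult_neg_pos)
  ultimately show False using psd_matD[OF p, of x] by simp
qed

definition pick_matrix :: "('a \<Rightarrow> 'a \<Rightarrow> complex) \<Rightarrow> (nat \<Rightarrow> 'a) \<Rightarrow> (nat \<Rightarrow> complex) \<Rightarrow> nat \<Rightarrow> nat \<Rightarrow> complex"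
  where "pick_matrix k lam z = (\<lambda>i j. (1 - z j * cnj (z i)) * k (lam i) (lam j))"

locale pick_kernel =
  fixes k :: "complex^('n::finite) \<Rightarrow> 'n hfun"
  assumes pick: "pick_property k"
begin

lemma psd_pick_matrix:
  assumes "distinct ps" "ps \<noteq> []" "set ps \<subseteq> unit_ball"
    and "cholo \<phi> unit_ball" "\<forall>w\<in>unit_ball. cmod (\<phi> w) \<le> 1"
  shows "psd_mat (length ps) (pick_matrix k (nth ps) (nth (map \<phi> ps)))"
proof -
  have "inj_on (nth ps) {..<length ps}" "\<forall>i<length ps. ps ! i \<in> unit_ball"
    "1 \<le> length ps"
    using assms(1-3) by (auto intro: inj_on_nth simp: Suc_le_eq)
  then show ?thesis
    using pick[unfolded pick_property_def, rule_format, of "length ps" "nth ps" "nth (map \<phi> ps)"]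
      assms(2,4,5) unfolding pick_matrix_def by auto
qed

lemma interpolant_if_psd:
  assumes "distinct ps" "set ps \<subseteq> unit_ball" "length ps = n" "length zs = n" "n \<ge> 1"
    and "psd_mat n (pick_matrix k (nth ps) (nth zs))"
  obtains \<phi> where "cholo \<phi> unit_ball" "\<forall>w\<in>unit_ball. cmod (\<phi> w) \<le> 1" "map \<phi> ps = zs"
proof -
  have "inj_on (nth ps) {..<n}" "\<forall>i<n. ps ! i \<in> unit_ball"
    using assms(1-3) by (auto intro: inj_on_nth)
  then obtain \<phi> where "cholo \<phi> unit_ball" "\<forall>w\<in>unit_ball. cmod (\<phi> w) \<le> 1"
      "\<forall>i<n. \<phi> (ps ! i) = zs ! i"
    using pick[unfolded pick_property_def, rule_format, of n "nth ps" "nth zs"]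
      assms(5,6) unfolding pick_matrix_def by auto
  then show ?thesis using that assms(3,4) by (simp add: list_eq_iff_nth_eq)
qed

lemma kernel_diag_real: "l \<in> unit_ball \<Longrightarrow> k l l = of_real (Re (k l l))"
  using psd_mat_diag(1)[OF psd_pick_matrix[of "[l]" "\<lambda>_. 0"]]
  by (simp add: cholo_const pick_matrix_def complex_is_Real_iff complex_eq_iff)

lemma kernel_diag_pos:
  assumes "l \<in> unit_ball"
  shows "0 < Re (k l l)"
proof (rule ccontr)
  have "0 \<le> Re (k l l)"
    using psd_mat_diag(2)[OF psd_pick_matrix[of "[l]" "\<lambda>_. 0"]] assms
    by (simp add: cholo_const pick_matrix_def)
  moreover assume "\<not> 0 < Re (k l l)"
  ultimately have "k l l = 0" using kernel_diag_real[OF assms] by simp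
  \<comment> \<open>then even the value \<open>2\<close> at \<open>l\<close> would pass the Pick test\<close>
  then have "psd_mat 1 (pick_matrix k (nth [l]) (nth [2]))"
    by (intro psd_matI) (simp add: quad_form_def pick_matrix_def)
  then obtain \<phi> where "\<forall>w\<in>unit_ball. cmod (\<phi> w) \<le> 1" "\<phi> l = 2"
    using interpolant_if_psd[of "[l]" 1 "[2]"] assms by auto
  then show False using assms by fastforce
qed

lemma kernel_diagE:
  assumes "l \<in> unit_ball"
  obtains a where "k l l = of_real a" "0 < a"
  using kernel_diag_real[OF assms] kernel_diag_pos[OF assms] by blast

lemma kernel_hermitian:
  assumes "l \<in> unit_ball" "\<mu> \<in> unit_ball"
  shows "k \<mu> l = cnj (k l \<mu>)"
proof (cases "l = \<mu>")
  case True then show ?thesis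
    using kernel_diag_real[OF assms(1)] by (metis complex_cnj_complex_of_real)
next
  case False
  show ?thesis
    using psd_mat_hermitian[OF psd_pick_matrix[of "[l, \<mu>]" "\<lambda>_. 0"], of 0 1] assms False
    by (simp add: cholo_const pick_matrix_def)
qed

text \<open>No function bounded by \<open>1\<close> and vanishing at \<open>0\<close> exceeds \<open>|\<lambda>|\<close> at \<open>\<lambda>\<close> (Schwarz), so the Pick
  matrix on \<open>{0, \<lambda>}\<close> with a larger target value must fail to be positive.\<close>
lemma kernel_origin_det_ge:
  assumes l: "l \<in> unit_ball" "l \<noteq> 0"
  shows "Re (k 0 0) * (1 - (norm l)\<^sup>2) * Re (k l l) \<le> (cmod (k 0 l))\<^sup>2"
proof -
  define a where "a = Re (k 0 0)"
  define b where "b = Re (k l l)"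
  define m where "m = (cmod (k 0 l))\<^sup>2"
  have ab: "a > 0" "b > 0" using kernel_diag_pos l by (simp_all add: a_def b_def)
  show ?thesis
  proof (cases "m \<le> a * b")
    case False
    have "0 \<le> a * b * (norm l)\<^sup>2" using ab by simp
    then have "a * (1 - (norm l)\<^sup>2) * b \<le> a * b" by (simp add: algebra_simps)
    with False show ?thesis by (simp add: a_def b_def m_def)
  next
    case True
    define w where "w = sqrt (1 - m / (a * b))"
    have w: "0 \<le> w" "w\<^sup>2 = 1 - m / (a * b)"
      using True ab by (simp_all add: w_def)
    let ?A = "pick_matrix k (nth [0, l]) (nth [0, of_real w])"
    have "psd_mat 2 ?A"
    proof (rule psd_mat_2I)
      show "?A 0 0 = of_real a"
        using kernel_diag_real[of 0] by (simp add: pick_matrix_def a_def)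
      show "?A 1 1 = of_real ((1 - w\<^sup>2) * b)"
        using kernel_diag_real[OF l(1)] by (simp add: pick_matrix_def power2_eq_square b_def)
      show "?A 1 0 = cnj (?A 0 1)"
        using kernel_hermitian[OF zero_in_unit_ball l(1)] by (simp add: pick_matrix_def)
      show "(cmod (?A 0 1))\<^sup>2 \<le> a * ((1 - w\<^sup>2) * b)"
        using w(2) ab by (simp add: pick_matrix_def m_def)
    qed (use ab in simp)
    then obtain \<phi> where "cholo \<phi> unit_ball" "\<forall>w\<in>unit_ball. cmod (\<phi> w) \<le> 1"
        "\<phi> 0 = 0" "\<phi> l = of_real w"
      using interpolant_if_psd[of "[0, l]" 2 "[0, of_real w]"] l by auto
    then have "w \<le> norm l" using cholo_Schwarz_Lemma[of \<phi> l] l w(1) by simp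
    then have "1 - (norm l)\<^sup>2 \<le> m / (a * b)"
      using w power_mono[of w "norm l" 2] by simp
    then show ?thesis using ab by (simp add: pos_le_divide_eq a_def b_def m_def mult_ac)
  qed
qed


lemma kernel_origin_identity:
  assumes l: "l \<in> unit_ball"
  shows "k 0 0 * of_real (1 - (norm l)\<^sup>2) * k l l = k 0 l * k l 0"
proof (cases "l = 0")
  case True then show ?thesis by simp
next
  case False
  define \<rho> where "\<rho> = norm l"
  define u where "u = (1 / of_real (norm l)) *s l"
  have u: "norm u = 1" unfolding u_def by (rule norm_normalize_vec[OF False])
  have "map (\<lambda>z. cinner z u) [0, l] = [0, of_real \<rho>]"
    using False by (simp add: u_def \<rho>_def cinner_normalize_right cinner_self power2_eq_square)
  then have "psd_mat 2 (pick_matrix k (nth [0, l]) (nth [0, of_real \<rho>]))"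
    using psd_pick_matrix[of "[0, l]" "\<lambda>z. cinner z u"] l False u
    by (simp add: cholo_cinner_left norm_cinner_unit_ball_le numeral_2_eq_2)
  from psd_mat_2_det[OF this, of "Re (k 0 0)"]
  have "(cmod (k 0 l))\<^sup>2 \<le> Re (k 0 0) * (1 - \<rho>\<^sup>2) * Re (k l l)"
    using kernel_diag_real[of 0] kernel_diag_real[OF l] kernel_diag_pos[of 0]
    by (simp add: pick_matrix_def power2_eq_square mult_ac)
  with kernel_origin_det_ge[OF l False]
  have "of_real (Re (k 0 0) * (1 - \<rho>\<^sup>2) * Re (k l l)) = k 0 l * cnj (k 0 l)"
    unfolding complex_norm_square[symmetric] \<rho>_def by simp
  then show ?thesis
    using kernel_diag_real[of 0] kernel_diag_real[OF l] kernel_hermitian[OF zero_in_unit_ball l]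
    by (simp add: \<rho>_def)
qed

lemma kernel_rank_one_identity:
  assumes l: "l \<in> unit_ball" and \<mu>: "\<mu> \<in> unit_ball"
  shows "k \<mu> l * k 0 0 * (1 - cinner l \<mu>) = k \<mu> 0 * k 0 l"
proof -
  consider "l = 0" | "\<mu> = 0" | "l = \<mu>" | "l \<noteq> 0" "\<mu> \<noteq> 0" "l \<noteq> \<mu>" by blast
  then show ?thesis
  proof cases
    case 3 then show ?thesis
      using kernel_origin_identity[OF l] by (simp add: cinner_self mult_ac)
  next
    case 4
    define \<rho> where "\<rho> = norm l"
    define u where "u = (1 / of_real (norm l)) *s l"
    have u: "norm u = 1" unfolding u_def by (rule norm_normalize_vec[OF 4(1)])
    have \<rho>: "\<rho> \<noteq> 0" using 4(1) by (simp add: \<rho>_def)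
    let ?A = "pick_matrix k (nth [0, l, \<mu>]) (nth [0, of_real \<rho>, cnj (cinner l \<mu>) / of_real \<rho>])"
    have "map (\<lambda>z. cinner z u) [0, l, \<mu>] = [0, of_real \<rho>, cnj (cinner l \<mu>) / of_real \<rho>]"
      using 4(1) by (simp add: u_def \<rho>_def cinner_normalize_right cinner_self cnj_cinner
          power2_eq_square)
    then have "psd_mat 3 ?A"
      using psd_pick_matrix[of "[0, l, \<mu>]" "\<lambda>z. cinner z u"] l \<mu> 4 u
      by (simp add: cholo_cinner_left norm_cinner_unit_ball_le numeral_3_eq_3)
    moreover have "?A 0 0 = k 0 0" "?A 0 1 = k 0 l" "?A 1 0 = k l 0"
      "?A 1 1 = of_real (1 - (norm l)\<^sup>2) * k l l"
      "?A 2 0 = k \<mu> 0" "?A 2 1 = (1 - cinner l \<mu>) * k \<mu> l"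
      using \<rho> by (simp_all add: pick_matrix_def \<rho>_def power2_eq_square)
    \<comment> \<open>the origin identity makes the leading minor singular, which forces the third row\<close>
    ultimately show ?thesis
      using psd_mat_3_singular_minor[of ?A "Re (k 0 0)"] kernel_diag_real[of 0] kernel_diag_pos[of 0]
        kernel_origin_identity[OF l]
      by (simp add: mult_ac)
  qed simp_all
qed

text \<open>Up to the rescaling by \<open>k 0\<close>, the kernel is the Drury--Arveson kernel.\<close>
lemma kernel_formula:
  assumes l: "l \<in> unit_ball" and \<mu>: "\<mu> \<in> unit_ball"
  shows "k \<mu> l = cnj (k 0 \<mu>) * k 0 l / (k 0 0 * (1 - cinner l \<mu>))"
proof -
  have "1 - cinner l \<mu> \<noteq> 0" by (rule one_minus_cinner_nonzero[OF l \<mu>])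
  moreover have "k 0 0 \<noteq> 0" using kernel_diag_pos[of 0] by auto
  ultimately show ?thesis
    using kernel_rank_one_identity[OF l \<mu>] kernel_hermitian[OF zero_in_unit_ball \<mu>]
    by (simp add: field_simps)
qed

lemma kernel_origin_nonzero:
  assumes "l \<in> unit_ball"
  shows "k 0 l \<noteq> 0"
proof
  assume "k 0 l = 0"
  then have "k 0 0 * of_real (1 - (norm l)\<^sup>2) * k l l = 0"
    using kernel_origin_identity[OF assms] by simp
  moreover have "1 - (norm l)\<^sup>2 \<noteq> 0"
    using assms by (simp add: unit_ball_iff abs_square_eq_1)
  moreover have "k 0 0 \<noteq> 0" "k l l \<noteq> 0"
    using kernel_diag_pos[of 0] kernel_diag_pos[OF assms] by auto
  ultimately show False by (metis mult_eq_0_iff of_real_eq_0_iff)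
qed

lemma quad_form_pick_matrix_rescaled:
  assumes "\<forall>i<n. lam i \<in> unit_ball"
  shows "quad_form n (pick_matrix k lam z) (\<lambda>i. of_real (y i) / k 0 (lam i))
    = (\<Sum>i<n. \<Sum>j<n. of_real (y i * y j) * (1 - z j * cnj (z i)) / (1 - cinner (lam j) (lam i)))
      / k 0 0"
  unfolding quad_form_def sum_divide_distrib
proof (intro sum.cong refl)
  fix i j assume "i \<in> {..<n}" "j \<in> {..<n}"
  then have "lam i \<in> unit_ball" "lam j \<in> unit_ball" using assms by auto
  then show "cnj (of_real (y i) / k 0 (lam i)) * pick_matrix k lam z i j * (of_real (y j) / k 0 (lam j))
    = of_real (y i * y j) * (1 - z j * cnj (z i)) / (1 - cinner (lam j) (lam i)) / k 0 0"
    using kernel_origin_nonzero kernel_formula[of "lam j" "lam i"] kernel_diag_pos[of 0]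
      one_minus_cinner_nonzero[of "lam j" "lam i"]
    by (auto simp: pick_matrix_def field_simps)
qed

end

definition pair_vec :: "'n \<Rightarrow> 'n \<Rightarrow> complex \<Rightarrow> complex \<Rightarrow> complex^('n::finite)" where
  "pair_vec i j a b = (\<chi> r. if r = i then a else if r = j then b else 0)"

lemma pair_vec_nth:
  assumes "i \<noteq> j"
  shows "pair_vec i j a b $ i = a" "pair_vec i j a b $ j = b"
  using assms by (simp_all add: pair_vec_def)

lemma pair_vec_eq_iff:
  assumes "i \<noteq> j"
  shows "pair_vec i j a b = pair_vec i j c d \<longleftrightarrow> a = c \<and> b = d"
  using assms by (auto simp: pair_vec_def vec_eq_iff)

lemma cinner_pair_vec:
  assumes "i \<noteq> j"
  shows "cinner (pair_vec i j a b) (pair_vec i j c d) = a * cnj c + b * cnj d"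
proof -
  have "cinner (pair_vec i j a b) (pair_vec i j c d)
      = (\<Sum>r\<in>UNIV. (if r = i then a * cnj c else 0) + (if r = j then b * cnj d else 0))"
    unfolding cinner_def by (intro sum.cong refl) (use assms in \<open>auto simp: pair_vec_def\<close>)
  then show ?thesis by (simp add: sum.distrib)
qed

lemma pair_vec_in_unit_ball:
  assumes "i \<noteq> j" "(cmod a)\<^sup>2 + (cmod b)\<^sup>2 < 1"
  shows "pair_vec i j a b \<in> unit_ball"
proof -
  have "complex_of_real ((norm (pair_vec i j a b))\<^sup>2) = a * cnj a + b * cnj b"
    using cinner_self[of "pair_vec i j a b"] cinner_pair_vec[OF assms(1)] by simp
  also have "\<dots> = of_real ((cmod a)\<^sup>2 + (cmod b)\<^sup>2)"
    by (simp only: of_real_add complex_norm_square)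
  finally have "(norm (pair_vec i j a b))\<^sup>2 = (cmod a)\<^sup>2 + (cmod b)\<^sup>2"
    using of_real_eq_iff by blast
  then have "(norm (pair_vec i j a b))\<^sup>2 < 1\<^sup>2"
    using assms(2) by simp
  then show ?thesis by (simp add: unit_ball_iff power2_less_imp_less)
qed

lemma norm_coord_mult_le:
  fixes w :: "complex^('n::finite)"
  assumes "i \<noteq> j" "w \<in> unit_ball"
  shows "cmod (2 * (w$i * w$j)) \<le> 1"
proof -
  have "(cmod (w$i))\<^sup>2 + (cmod (w$j))\<^sup>2 = (\<Sum>r\<in>{i, j}. (cmod (w$r))\<^sup>2)"
    using assms(1) by simp
  also have "\<dots> \<le> (norm w)\<^sup>2"
    unfolding power2_norm_vec by (rule sum_mono2) auto
  also have "\<dots> < 1"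
    using assms(2) by (simp add: unit_ball_iff abs_square_less_1)
  finally show ?thesis
    using sum_squares_bound[of "cmod (w$i)" "cmod (w$j)"] by (simp add: norm_mult power2_eq_square)
qed

lemma (in pick_kernel) card_less_2: "CARD('n) < 2"
proof (rule ccontr)
  assume "\<not> CARD('n) < 2"
  then obtain i j :: 'n where ij: "i \<noteq> j"
    using card_le_Suc0_iff_eq[of "UNIV :: 'n set"] by force
  define ps where "ps = [pair_vec i j (-1/2) (-1/2), pair_vec i j (-1/2) (1/2), pair_vec i j (1/2) (-1/2)]"
  define \<phi> :: "complex^'n \<Rightarrow> complex" where "\<phi> w = 2 * (w$i * w$j)" for w
  define y :: "nat \<Rightarrow> real" where "y = nth [-3, 2, 2]"
  let ?A = "pick_matrix k (nth ps) (nth (map \<phi> ps))"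
  have ps: "distinct ps" "set ps \<subseteq> unit_ball"
    using ij by (auto simp: ps_def pair_vec_eq_iff[OF ij] power2_eq_square
        intro!: pair_vec_in_unit_ball)
  have "psd_mat (length ps) ?A"
  proof (rule psd_pick_matrix[OF ps(1) _ ps(2)])
    show "ps \<noteq> []" by (simp add: ps_def)
    show "cholo \<phi> unit_ball" unfolding \<phi>_def by (rule cholo_coord_mult)
    show "\<forall>w\<in>unit_ball. cmod (\<phi> w) \<le> 1" unfolding \<phi>_def using norm_coord_mult_le[OF ij] by blast
  qed
  moreover have "length ps = 3" by (simp add: ps_def)
  ultimately have psd: "psd_mat 3 ?A" by simp
  have "\<forall>t<3. ps ! t \<in> unit_ball"
    using ps(2) \<open>length ps = 3\<close> by (metis nth_mem subsetD)
  from quad_form_pick_matrix_rescaled[OF this, of "nth (map \<phi> ps)" y]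
  have quad: "quad_form 3 ?A (\<lambda>t. of_real (y t) / k 0 (ps ! t)) = - 1 / (2 * k 0 0)"
    by (simp add: numeral_3_eq_3 lessThan_Suc ps_def \<phi>_def y_def cinner_pair_vec[OF ij]
        pair_vec_nth[OF ij] field_simps)
  obtain a where "k 0 0 = of_real a" "0 < a" by (rule kernel_diagE[OF zero_in_unit_ball])
  with quad have "Re (quad_form 3 ?A (\<lambda>t. of_real (y t) / k 0 (ps ! t))) < 0" by simp
  then show False using psd_matD[OF psd] by (metis not_less)
qed

theorem mainTheorem14:
  assumes "CARD('n::{finite,linorder}) \<ge> 2"
  shows "\<not> (\<exists>(H :: 'n hfun set) ip k. regular_hilbert_space H ip k \<and> pick_property k)"
proof
  assume "\<exists>(H :: 'n hfun set) ip k. regular_hilbert_space H ip k \<and> pick_property k"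
  then obtain H ip k where "regular_hilbert_space (H :: 'n hfun set) ip k" "pick_property k"
    by blast
  then interpret pick_kernel k by unfold_locales
  show False using card_less_2 assms by simp
qed

end
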